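(* Let $\{e_1,\dots,e_n\}$ be a basis of the free abelian group $\mathbb Z^n$, and let $$\widetilde V=\{e_1,\dots,e_n\}\cup\{e_i-e_j:1\le i<j\le n\}.$$ For any $v,v_1,\dots,v_k\in\widetilde V$, if the subgroup of $\mathbb Z^n$ generated by $\{v_1,\dots,v_k\}$ contains some non-zero multiple of $v$, then it contains $v$. *)

theory Defs
  imports Main
begin

text \<open>Z^n is modelled as integer vectors x :: nat \<Rightarrow> int with x t = 0 for t \<ge> n
  (coordinates indexed 0..n-1). Group operations are pointwise.\<close>

definition Zn :: "nat \<Rightarrow> (nat \<Rightarrow> int) set" where
  "Zn n = {x. \<forall>t\<ge>n. x t = 0}"

definition is_Z_basis :: "nat \<Rightarrow> (nat \<Rightarrow> nat \<Rightarrow> int) \<Rightarrow> bool" where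
  "is_Z_basis n e \<longleftrightarrow>
     (\<forall>i\<in>{1..n}. e i \<in> Zn n) \<and>
     (\<forall>x\<in>Zn n. \<exists>!c::nat \<Rightarrow> int. (\<forall>i. i \<notin> {1..n} \<longrightarrow> c i = 0) \<and>
                      x = (\<lambda>t. \<Sum>i=1..n. c i * e i t))"

definition Vtilde :: "nat \<Rightarrow> (nat \<Rightarrow> nat \<Rightarrow> int) \<Rightarrow> (nat \<Rightarrow> int) set" where
  "Vtilde n e = {e i | i. i \<in> {1..n}} \<union>
                {(\<lambda>t. e i t - e j t) | i j. 1 \<le> i \<and> i < j \<and> j \<le> n}"

definition gen_subgroup :: "nat \<Rightarrow> (nat \<Rightarrow> nat \<Rightarrow> int) \<Rightarrow> (nat \<Rightarrow> int) set" where
  "gen_subgroup k vs = {(\<lambda>t. \<Sum>i=1..k. c i * vs i t) | c :: nat \<Rightarrow> int. True}"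

end

theory Submission
  imports Defs
begin

text \<open>Put E 0 = 0 and E i = e i for 1 \<le> i \<le> n. Every element of Vtilde is a
  difference E a - E b, so the generators v_l = E p_l - E q_l are the edges of a graph on
  {0..n}. If the endpoints of v are joined by a path, v is the telescoping sum of the edge
  vectors along it. Otherwise take a set S of nonzero vertices that is a union of components
  and separates the endpoints: the functional summing the S-coordinates kills every
  generator but takes the value \<plusminus>m on m v.\<close>

lemma sum_of_bool_eq_mult:
  fixes f :: "'a \<Rightarrow> 'b::semiring_1"
  assumes "finite A"
  shows "(\<Sum>i\<in>A. of_bool (i = j) * f i) = of_bool (j \<in> A) * f j"
proof -
  have "(\<Sum>i\<in>A. of_bool (i = j) * f i) = (\<Sum>i\<in>A. if i = j then f i else 0)"
    by (rule sum.cong) auto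
  then show ?thesis using assms by simp
qed

lemma gen_subgroupI:
  assumes "x = (\<lambda>t. \<Sum>i=1..k. c i * vs i t)"
  shows "x \<in> gen_subgroup k vs"
  using assms unfolding gen_subgroup_def by blast

lemma gen_subgroupE:
  assumes "x \<in> gen_subgroup k vs"
  obtains c where "x = (\<lambda>t. \<Sum>i=1..k. c i * vs i t)"
  using assms unfolding gen_subgroup_def by blast

lemma gen_subgroup_zero: "(\<lambda>t. 0) \<in> gen_subgroup k vs"
  by (rule gen_subgroupI[where c="\<lambda>_. 0"]) simp

lemma gen_subgroup_add:
  assumes "x \<in> gen_subgroup k vs" "y \<in> gen_subgroup k vs"
  shows "(\<lambda>t. x t + y t) \<in> gen_subgroup k vs"
proof -
  obtain c where "x = (\<lambda>t. \<Sum>i=1..k. c i * vs i t)"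
    using assms(1) by (rule gen_subgroupE)
  moreover obtain d where "y = (\<lambda>t. \<Sum>i=1..k. d i * vs i t)"
    using assms(2) by (rule gen_subgroupE)
  ultimately show ?thesis
    by (intro gen_subgroupI[where c="\<lambda>i. c i + d i"]) (simp add: sum.distrib distrib_right)
qed

lemma gen_subgroup_uminus:
  assumes "x \<in> gen_subgroup k vs"
  shows "(\<lambda>t. - x t) \<in> gen_subgroup k vs"
proof -
  obtain c where "x = (\<lambda>t. \<Sum>i=1..k. c i * vs i t)"
    using assms by (rule gen_subgroupE)
  then show ?thesis
    by (intro gen_subgroupI[where c="\<lambda>i. - c i"]) (simp add: sum_negf)
qed

lemma gen_subgroup_generator:
  assumes "l \<in> {1..k}"
  shows "vs l \<in> gen_subgroup k vs"
proof (rule gen_subgroupI[where c="\<lambda>i. of_bool (i = l)"])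
  show "vs l = (\<lambda>t. \<Sum>i=1..k. of_bool (i = l) * vs i t)"
    using assms by (simp add: sum_of_bool_eq_mult)
qed

definition edge_rel :: "nat \<Rightarrow> (nat \<Rightarrow> nat) \<Rightarrow> (nat \<Rightarrow> nat) \<Rightarrow> (nat \<times> nat) set" where
  "edge_rel k p q = {(p l, q l) | l. l \<in> {1..k}} \<union> {(q l, p l) | l. l \<in> {1..k}}"

lemma gen_subgroup_path_difference:
  assumes gens: "\<And>l. l \<in> {1..k} \<Longrightarrow> vs l = (\<lambda>t. f (p l) t - f (q l) t)"
    and path: "(a, b) \<in> (edge_rel k p q)\<^sup>*"
  shows "(\<lambda>t. f a t - f b t) \<in> gen_subgroup k vs"
  using path
proof (induction rule: rtrancl_induct)
  case base
  then show ?case using gen_subgroup_zero by simp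
next
  case (step y z)
  obtain l where l: "l \<in> {1..k}" "(y = p l \<and> z = q l) \<or> (y = q l \<and> z = p l)"
    using step.hyps(2) unfolding edge_rel_def by blast
  have edge: "(\<lambda>t. f (p l) t - f (q l) t) \<in> gen_subgroup k vs"
    using gen_subgroup_generator[of l k vs, OF l(1)] gens[OF l(1)] by simp
  have "(\<lambda>t. f y t - f z t) \<in> gen_subgroup k vs"
    using l(2) edge gen_subgroup_uminus[OF edge] by auto
  from gen_subgroup_add[OF step.IH this] show ?case by simp
qed

lemma edge_rel_component_closed:
  assumes "l \<in> {1..k}"
  shows "p l \<in> (edge_rel k p q)\<^sup>* `` {a} \<longleftrightarrow> q l \<in> (edge_rel k p q)\<^sup>* `` {a}"
proof -
  have "(p l, q l) \<in> edge_rel k p q" "(q l, p l) \<in> edge_rel k p q"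
    using assms unfolding edge_rel_def by blast+
  then show ?thesis by (meson Image_singleton_iff rtrancl.rtrancl_into_rtrancl)
qed

lemma is_Z_basis_coeff_eq:
  assumes basis: "is_Z_basis n e"
    and eq: "(\<lambda>t. \<Sum>i=1..n. d i * e i t) = (\<lambda>t. \<Sum>i=1..n. d' i * e i t)"
    and i: "i \<in> {1..n}"
  shows "d i = d' i"
proof -
  define x where "x = (\<lambda>t. \<Sum>i=1..n. d i * e i t)"
  have "\<forall>i\<in>{1..n}. e i \<in> Zn n"
    and unique: "\<forall>x\<in>Zn n. \<exists>!c::nat \<Rightarrow> int. (\<forall>i. i \<notin> {1..n} \<longrightarrow> c i = 0) \<and>
                       x = (\<lambda>t. \<Sum>i=1..n. c i * e i t)"
    using basis unfolding is_Z_basis_def by auto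
  then have "x \<in> Zn n" unfolding x_def Zn_def by auto
  define c where "c = (\<lambda>i. if i \<in> {1..n} then d i else 0)"
  define c' where "c' = (\<lambda>i. if i \<in> {1..n} then d' i else 0)"
  have "(\<forall>i. i \<notin> {1..n} \<longrightarrow> c i = 0) \<and> x = (\<lambda>t. \<Sum>i=1..n. c i * e i t)"
    unfolding c_def x_def by (auto intro!: sum.cong)
  moreover have "(\<forall>i. i \<notin> {1..n} \<longrightarrow> c' i = 0) \<and> x = (\<lambda>t. \<Sum>i=1..n. c' i * e i t)"
    unfolding c'_def x_def eq by (auto intro!: sum.cong)
  ultimately have "c = c'" using unique \<open>x \<in> Zn n\<close> by blast
  then have "c i = c' i" by simp
  then show ?thesis using i by (simp add: c_def c'_def)
qed

lemma is_Z_basis_coeff_sum_eq: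
  assumes "is_Z_basis n e"
    and "(\<lambda>t. \<Sum>i=1..n. d i * e i t) = (\<lambda>t. \<Sum>i=1..n. d' i * e i t)"
    and "S \<subseteq> {1..n}"
  shows "sum d S = sum d' S"
  using assms(3) by (intro sum.cong refl is_Z_basis_coeff_eq[OF assms(1,2)]) blast

definition vertex_vec :: "(nat \<Rightarrow> nat \<Rightarrow> int) \<Rightarrow> nat \<Rightarrow> nat \<Rightarrow> int" where
  "vertex_vec e j = (if j = 0 then (\<lambda>t. 0) else e j)"

lemma Vtilde_vertex_diff:
  assumes "x \<in> Vtilde n e"
  obtains a b where "a \<le> n" "b \<le> n" "x = (\<lambda>t. vertex_vec e a t - vertex_vec e b t)"
proof -
  from assms consider (basis) i where "i \<in> {1..n}" "x = e i"
    | (diff) i j where "1 \<le> i" "i < j" "j \<le> n" "x = (\<lambda>t. e i t - e j t)"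
    unfolding Vtilde_def by blast
  then show ?thesis
  proof cases
    case (basis i)
    then show ?thesis by (intro that[of i 0]) (auto simp: vertex_vec_def)
  next
    case (diff i j)
    then show ?thesis by (intro that[of i j]) (auto simp: vertex_vec_def)
  qed
qed

lemma vertex_vec_expansion:
  assumes "j \<le> n"
  shows "vertex_vec e j t = (\<Sum>i=1..n. of_bool (i = j) * e i t)"
  using assms by (simp add: vertex_vec_def sum_of_bool_eq_mult)

lemma vertex_vec_diff_expansion:
  assumes "a \<le> n" "b \<le> n"
  shows "vertex_vec e a t - vertex_vec e b t
         = (\<Sum>i=1..n. (of_bool (i = a) - of_bool (i = b)) * e i t)"
  by (simp add: vertex_vec_expansion[OF assms(1)] vertex_vec_expansion[OF assms(2)]
      sum_subtractf[symmetric] left_diff_distrib del: sum_of_bool_mult_eq)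

lemma Vtilde_vertex_diff_family:
  assumes "\<forall>l\<in>L. vs l \<in> Vtilde n e"
  shows "\<exists>p q. \<forall>l\<in>L.
    p l \<le> n \<and> q l \<le> n \<and> vs l = (\<lambda>t. vertex_vec e (p l) t - vertex_vec e (q l) t)"
proof -
  have "\<forall>l\<in>L. \<exists>a b. a \<le> n \<and> b \<le> n \<and> vs l = (\<lambda>t. vertex_vec e a t - vertex_vec e b t)"
  proof
    fix l assume "l \<in> L"
    then obtain a b where "a \<le> n" "b \<le> n" "vs l = (\<lambda>t. vertex_vec e a t - vertex_vec e b t)"
      using assms Vtilde_vertex_diff by blast
    then show "\<exists>a b. a \<le> n \<and> b \<le> n \<and> vs l = (\<lambda>t. vertex_vec e a t - vertex_vec e b t)"
      by blast
  qed
  from bchoice[OF this] obtain p where "\<forall>l\<in>L. \<exists>b. p l \<le> n \<and> b \<le> n \<and>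
      vs l = (\<lambda>t. vertex_vec e (p l) t - vertex_vec e b t)"
    by blast
  from bchoice[OF this] show ?thesis by blast
qed

lemma cut_functional_vanishes:
  assumes basis: "is_Z_basis n e"
    and gens: "\<And>l. l \<in> {1..k} \<Longrightarrow>
      p l \<le> n \<and> q l \<le> n \<and> vs l = (\<lambda>t. vertex_vec e (p l) t - vertex_vec e (q l) t)"
    and S: "S \<subseteq> {1..n}" "\<And>l. l \<in> {1..k} \<Longrightarrow> p l \<in> S \<longleftrightarrow> q l \<in> S"
    and ab: "a \<le> n" "b \<le> n"
    and mem: "(\<lambda>t. m * (vertex_vec e a t - vertex_vec e b t)) \<in> gen_subgroup k vs"
  shows "m * (of_bool (a \<in> S) - of_bool (b \<in> S)) = 0"
proof -
  obtain c where c: "(\<lambda>t. m * (vertex_vec e a t - vertex_vec e b t))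
                      = (\<lambda>t. \<Sum>l=1..k. c l * vs l t)"
    using mem by (rule gen_subgroupE)
  let ?\<delta> = "\<lambda>j i. of_bool (i = j) :: int"
  define d where "d i = m * (?\<delta> a i - ?\<delta> b i)" for i
  define d' where "d' i = (\<Sum>l=1..k. c l * (?\<delta> (p l) i - ?\<delta> (q l) i))" for i
  have lhs: "m * (vertex_vec e a t - vertex_vec e b t) = (\<Sum>i=1..n. d i * e i t)" for t
    by (simp add: vertex_vec_diff_expansion[OF ab] d_def sum_distrib_left mult.assoc)
  have rhs: "(\<Sum>l=1..k. c l * vs l t) = (\<Sum>i=1..n. d' i * e i t)" for t
  proof -
    have "vs l t = (\<Sum>i=1..n. (?\<delta> (p l) i - ?\<delta> (q l) i) * e i t)" if "l \<in> {1..k}" for l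
      using gens[OF that] vertex_vec_diff_expansion[where n=n] by simp
    then have "(\<Sum>l=1..k. c l * vs l t)
          = (\<Sum>l=1..k. \<Sum>i=1..n. c l * (?\<delta> (p l) i - ?\<delta> (q l) i) * e i t)"
      by (simp add: sum_distrib_left mult.assoc)
    also have "\<dots> = (\<Sum>i=1..n. d' i * e i t)"
      by (subst sum.swap) (simp add: d'_def sum_distrib_right)
    finally show ?thesis .
  qed
  have "(\<lambda>t. \<Sum>i=1..n. d i * e i t) = (\<lambda>t. \<Sum>i=1..n. d' i * e i t)"
  proof
    fix t
    have "(\<Sum>i=1..n. d i * e i t) = m * (vertex_vec e a t - vertex_vec e b t)"
      by (rule lhs[symmetric])
    also have "\<dots> = (\<Sum>l=1..k. c l * vs l t)"
      using fun_cong[OF c] .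
    finally show "(\<Sum>i=1..n. d i * e i t) = (\<Sum>i=1..n. d' i * e i t)"
      unfolding rhs .
  qed
  then have "sum d S = sum d' S"
    by (rule is_Z_basis_coeff_sum_eq[OF basis _ S(1)])
  have indicator_sum: "(\<Sum>i\<in>S. ?\<delta> j i) = of_bool (j \<in> S)" for j
  proof -
    have "finite S" using S(1) finite_subset by blast
    from sum_of_bool_eq_mult[OF this, of j "\<lambda>_. 1 :: int"] show ?thesis by simp
  qed
  have "sum d' S = (\<Sum>l=1..k. c l * (of_bool (p l \<in> S) - of_bool (q l \<in> S)))"
    unfolding d'_def
    by (subst sum.swap) (simp add: sum_distrib_left[symmetric] sum_subtractf indicator_sum
        del: sum_of_bool_eq)
  also have "\<dots> = 0"
    using S(2) by (intro sum.neutral) simp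
  finally have "sum d' S = 0" .
  moreover have "sum d S = m * (of_bool (a \<in> S) - of_bool (b \<in> S))"
    unfolding d_def
    by (simp add: sum_distrib_left[symmetric] sum_subtractf indicator_sum del: sum_of_bool_eq)
  ultimately show ?thesis using \<open>sum d S = sum d' S\<close> by simp
qed

lemma separating_vertex_set:
  assumes path: "(a, b) \<notin> (edge_rel k p q)\<^sup>*"
    and bounded: "\<forall>l\<in>{1..k}. p l \<le> n \<and> q l \<le> n"
    and ab: "a \<le> n" "b \<le> n"
  shows "\<exists>S\<subseteq>{1..n}. (\<forall>l\<in>{1..k}. p l \<in> S \<longleftrightarrow> q l \<in> S) \<and> (a \<in> S \<longleftrightarrow> b \<notin> S)"
proof -
  define C where "C = (edge_rel k p q)\<^sup>* `` {a}"
  have closed: "p l \<in> C \<longleftrightarrow> q l \<in> C" if "l \<in> {1..k}" for l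
    unfolding C_def using that by (rule edge_rel_component_closed)
  have "a \<in> C" "b \<notin> C" using path unfolding C_def by blast+
  show ?thesis
  proof (cases "0 \<in> C")
    case True
    then have "b \<noteq> 0" using \<open>b \<notin> C\<close> by (intro notI) simp
    have "p l \<in> {1..n} - C \<longleftrightarrow> q l \<in> {1..n} - C" if "l \<in> {1..k}" for l
      using closed[OF that] bounded that True by (cases "p l = 0"; cases "q l = 0") auto
    moreover have "a \<in> {1..n} - C \<longleftrightarrow> b \<notin> {1..n} - C"
      using ab \<open>a \<in> C\<close> \<open>b \<notin> C\<close> \<open>b \<noteq> 0\<close> by auto
    ultimately show ?thesis by (intro exI[of _ "{1..n} - C"]) auto
  next
    case False
    then have "a \<noteq> 0" using \<open>a \<in> C\<close> by (intro notI) simp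
    have "p l \<in> {1..n} \<inter> C \<longleftrightarrow> q l \<in> {1..n} \<inter> C" if "l \<in> {1..k}" for l
      using closed[OF that] bounded that False by (cases "p l = 0"; cases "q l = 0") auto
    moreover have "a \<in> {1..n} \<inter> C \<longleftrightarrow> b \<notin> {1..n} \<inter> C"
      using ab \<open>a \<in> C\<close> \<open>b \<notin> C\<close> \<open>a \<noteq> 0\<close> by auto
    ultimately show ?thesis by (intro exI[of _ "{1..n} \<inter> C"]) auto
  qed
qed

theorem propositionA1:
  fixes n k :: nat and e vs :: "nat \<Rightarrow> nat \<Rightarrow> int" and v :: "nat \<Rightarrow> int"
  assumes "is_Z_basis n e"
    and "v \<in> Vtilde n e"
    and "\<forall>i\<in>{1..k}. vs i \<in> Vtilde n e"
    and "\<exists>m::int. m \<noteq> 0 \<and> (\<lambda>t. m * v t) \<in> gen_subgroup k vs"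
  shows "v \<in> gen_subgroup k vs"
proof (rule ccontr)
  assume v_out: "v \<notin> gen_subgroup k vs"
  let ?E = "vertex_vec e"
  obtain a b where ab: "a \<le> n" "b \<le> n" "v = (\<lambda>t. ?E a t - ?E b t)"
    using assms(2) by (rule Vtilde_vertex_diff)
  obtain p q where "\<forall>l\<in>{1..k}.
      p l \<le> n \<and> q l \<le> n \<and> vs l = (\<lambda>t. ?E (p l) t - ?E (q l) t)"
    using Vtilde_vertex_diff_family[OF assms(3)] by blast
  note pq = this[rule_format]
  have no_path: "(a, b) \<notin> (edge_rel k p q)\<^sup>*"
    using v_out gen_subgroup_path_difference[of k vs ?E p q a b] pq ab(3) by blast
  have bounded: "\<forall>l\<in>{1..k}. p l \<le> n \<and> q l \<le> n" using pq by blast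
  from separating_vertex_set[OF no_path bounded ab(1,2)]
  obtain S where "S \<subseteq> {1..n}" "\<forall>l\<in>{1..k}. p l \<in> S \<longleftrightarrow> q l \<in> S"
      "a \<in> S \<longleftrightarrow> b \<notin> S"
    by blast
  note S = this[rule_format]
  obtain m where "m \<noteq> 0" "(\<lambda>t. m * v t) \<in> gen_subgroup k vs"
    using assms(4) by blast
  then have "m * (of_bool (a \<in> S) - of_bool (b \<in> S)) = 0"
    using cut_functional_vanishes[where k=k and vs=vs and p=p and q=q and m=m,
        OF assms(1) pq S(1,2) ab(1,2)] ab(3) by simp
  with \<open>m \<noteq> 0\<close> S(3) show False by auto
qed

end
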